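(* Let $\mathbf{X},\mathbf{Y},\mathbf{Z}$ be Banach spaces, and let $\mathcal{S}_{\mathbf{X}}\subset\mathbf{X}$, $\mathcal{S}_{\mathbf{Y}}\subset\mathbf{Y}$, $\mathcal{S}\subset\mathbf{Z}$. Assume that 1. $s^\ast_{\mathbf{X}}(\mathcal{S}_{\mathbf{X}})=s^\ast_{\mathbf{Y}}(\mathcal{S}_{\mathbf{Y}})$; 2. there exists a Lipschitz continuous map $\Phi:\mathcal{S}_{\mathbf{X}}\to\mathbf{Z}$ with $\Phi(\mathcal{S}_{\mathbf{X}})\supset\mathcal{S}$; 3. there exists a Borel probability measure $\mathbb{P}$ on $\mathcal{S}_{\mathbf{Y}}$ that is critical for $\mathcal{S}_{\mathbf{Y}}$ with respect to $\mathbf{Y}$; 4. there exists a measurable map $\Psi:\mathcal{S}_{\mathbf{Y}}\to\mathcal{S}$ and $\kappa>0$ with $\|\Psi(\mathbf{x})-\Psi(\mathbf{x}')\|_{\mathbf{Z}}\ge\kappa\|\mathbf{x}-\mathbf{x}'\|_{\mathbf{Y}}$ for all $\mathbf{x},\mathbf{x}'\in\mathcal{S}_{\mathbf{Y}}$. Then $s^\ast_{\mathbf{Z}}(\mathcal{S})=s^\ast_{\mathbf{X}}(\mathcal{S}_{\mathbf{X}})$, and the push-forward measure $\mathbb{P}\circ\Psi^{-1}$ is a Borel probability measure on $\mathcal{S}$ that is critical for $\mathcal{S}$ with respect to $\mathbf{Z}$.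
   Context: For a real Banach space $\mathbf{X}$ and $\mathcal{S}\subset\mathbf{X}$: a codec is a sequence $((E_R,D_R))_{R\in\mathbb{N}}$ of maps $E_R:\mathcal{S}\to\{0,1\}^R$, $D_R:\{0,1\}^R\to\mathbf{X}$; distortion $\delta_{\mathcal{S},\mathbf{X}}(E_R,D_R)=\sup_{\mathbf{x}\in\mathcal{S}}\|\mathbf{x}-D_R(E_R(\mathbf{x}))\|_{\mathbf{X}}$; optimal compression rate $s^\ast_{\mathbf{X}}(\mathcal{S})=\sup\{s\ge0:\exists\text{ codec with }\sup_RR^s\delta_{\mathcal{S},\mathbf{X}}(E_R,D_R)<\infty\}$. Subsets are equipped with the trace of the Borel $\sigma$-algebra of the ambient space (this also defines measurability of $\Psi$). A Borel probability measure $\mathbb{P}$ on $\mathcal{S}$ has (logarithmic) growth order $s_0\in[0,\infty)$ w.r.t. $\mathbf{X}$ if for every $s>s_0$ there exist $\varepsilon_0,c>0$ with $\mathbb{P}(\mathcal{S}\cap\mathcal{B}(\mathbf{x},\varepsilon;\mathbf{X}))\le2^{-c\varepsilon^{-1/s}}$ for all $\mathbf{x}\in\mathbf{X}$, $\varepsilon\in(0,\varepsilon_0)$ (closed balls); it is critical for $\mathcal{S}$ w.r.t. $\mathbf{X}$ if it has growth order $s^\ast_{\mathbf{X}}(\mathcal{S})$. *)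

theory Defs
  imports "HOL-Probability.Probability"
begin

text \<open>Distortion of an encoder/decoder pair on S (value in the extended reals;
  the supremum over the empty set is -infinity).\<close>
definition distortion :: "'a::real_normed_vector set \<Rightarrow> ('a \<Rightarrow> bool list) \<Rightarrow> (bool list \<Rightarrow> 'a) \<Rightarrow> ereal" where
  "distortion S E D = (SUP x\<in>S. ereal (norm (x - D (E x))))"

definition is_codec :: "'a set \<Rightarrow> (nat \<Rightarrow> 'a \<Rightarrow> bool list) \<Rightarrow> (nat \<Rightarrow> bool list \<Rightarrow> 'a) \<Rightarrow> bool" where
  "is_codec S E D \<longleftrightarrow> (\<forall>R\<ge>1. \<forall>x\<in>S. length (E R x) = R)"

definition opt_rate :: "'a::real_normed_vector set \<Rightarrow> ereal" where
  "opt_rate S = Sup {ereal s | s. s \<ge> 0 \<and> (\<exists>E D. is_codec S E D \<and>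
       (SUP R\<in>{1::nat..}. ereal (real R powr s) * distortion S (E R) (D R)) < \<infinity>)}"

definition borel_prob_on :: "'a::topological_space set \<Rightarrow> 'a measure \<Rightarrow> bool" where
  "borel_prob_on S P \<longleftrightarrow> prob_space P \<and> sets P = sets (restrict_space borel S)"

definition growth_order :: "'a::real_normed_vector set \<Rightarrow> 'a measure \<Rightarrow> real \<Rightarrow> bool" where
  "growth_order S P s0 \<longleftrightarrow> s0 \<ge> 0 \<and>
     (\<forall>s>s0. \<exists>\<epsilon>0>0. \<exists>c>0. \<forall>x. \<forall>\<epsilon>. 0 < \<epsilon> \<and> \<epsilon> < \<epsilon>0 \<longrightarrow>
        measure P (S \<inter> cball x \<epsilon>) \<le> 2 powr (- c * \<epsilon> powr (- 1 / s)))"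

definition critical :: "'a::real_normed_vector set \<Rightarrow> 'a measure \<Rightarrow> bool" where
  "critical S P \<longleftrightarrow> (\<exists>s0. opt_rate S = ereal s0 \<and> growth_order S P s0)"

end

theory Submission
  imports Defs "HOL-Real_Asymp.Real_Asymp"
begin

text \<open>Codecs for S_X are carried over to S along the Lipschitz map \<Phi>, which gives
  s*(S) \<ge> s*(S_X). Conversely, since \<Psi> expands distances by at least \<kappa>, the preimage of an
  \<epsilon>-ball is contained in a (2\<epsilon>/\<kappa>)-ball, so the push-forward of P inherits the growth order
  s*(S_Y) = s*(S_X). A measure of growth order s0 rules out every rate s > s0: a codec of
  rate s covers S by 2^R balls of radius about R^(-s), each of which carries mass at most
  2^(-c R^(s/s')) for some s' strictly between s0 and s, and these cannot add up to 1.\<close>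

definition achievable_rate :: "'a::real_normed_vector set \<Rightarrow> real \<Rightarrow> bool" where
  "achievable_rate S s \<longleftrightarrow> (\<exists>E D. is_codec S E D \<and>
     (SUP R\<in>{1::nat..}. ereal (real R powr s) * distortion S (E R) (D R)) < \<infinity>)"

lemma opt_rate_eq_Sup_achievable: "opt_rate S = Sup {ereal s | s. s \<ge> 0 \<and> achievable_rate S s}"
  by (simp add: opt_rate_def achievable_rate_def)

lemma achievable_rate_iff_bounded:
  "achievable_rate S s \<longleftrightarrow>
     (\<exists>E D m. is_codec S E D \<and> (\<forall>R\<ge>1. \<forall>x\<in>S. real R powr s * norm (x - D R (E R x)) \<le> m))"
proof
  assume "achievable_rate S s"
  then obtain E D where cod: "is_codec S E D"
    and fin: "(SUP R\<in>{1::nat..}. ereal (real R powr s) * distortion S (E R) (D R)) < \<infinity>"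
      (is "?M < \<infinity>")
    unfolding achievable_rate_def by blast
  have le: "ereal (real R powr s * norm (x - D R (E R x))) \<le> ?M" if "R \<ge> 1" "x \<in> S" for R x
  proof -
    have "ereal (norm (x - D R (E R x))) \<le> distortion S (E R) (D R)"
      unfolding distortion_def using that(2) by (rule SUP_upper)
    then have "ereal (real R powr s) * ereal (norm (x - D R (E R x)))
        \<le> ereal (real R powr s) * distortion S (E R) (D R)"
      by (rule ereal_mult_left_mono) simp
    also have "\<dots> \<le> ?M" using that(1) by (intro SUP_upper) auto
    finally show ?thesis by simp
  qed
  have "\<exists>m. \<forall>R\<ge>1. \<forall>x\<in>S. real R powr s * norm (x - D R (E R x)) \<le> m"
  proof (cases "S = {}")
    case False
    then obtain x where "x \<in> S" by blast
    with le[of 1 x] fin obtain m where "?M = ereal m" by (cases ?M) auto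
    with le show ?thesis by auto
  qed simp
  with cod show "\<exists>E D m. is_codec S E D \<and> (\<forall>R\<ge>1. \<forall>x\<in>S. real R powr s * norm (x - D R (E R x)) \<le> m)"
    by blast
next
  assume "\<exists>E D m. is_codec S E D \<and> (\<forall>R\<ge>1. \<forall>x\<in>S. real R powr s * norm (x - D R (E R x)) \<le> m)"
  then obtain E D m where cod: "is_codec S E D"
    and bnd: "\<And>R x. R \<ge> 1 \<Longrightarrow> x \<in> S \<Longrightarrow> real R powr s * norm (x - D R (E R x)) \<le> m"
    by blast
  have "ereal (real R powr s) * distortion S (E R) (D R) \<le> ereal m" if R: "R \<ge> 1" for R :: nat
  proof -
    have pos: "real R powr s > 0" using R by simp
    have "distortion S (E R) (D R) \<le> ereal (m / real R powr s)"
      unfolding distortion_def using bnd[OF R] pos by (intro SUP_least) (simp add: field_simps)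
    then have "ereal (real R powr s) * distortion S (E R) (D R)
        \<le> ereal (real R powr s) * ereal (m / real R powr s)"
      by (rule ereal_mult_left_mono) simp
    also have "\<dots> = ereal m" using pos by simp
    finally show ?thesis .
  qed
  then have "(SUP R\<in>{1::nat..}. ereal (real R powr s) * distortion S (E R) (D R)) < \<infinity>"
    by (intro le_less_trans[OF SUP_least]) auto
  with cod show "achievable_rate S s" unfolding achievable_rate_def by blast
qed

lemma achievable_rate_lipschitz_image:
  assumes lip: "L-lipschitz_on SX \<Phi>" and img: "S \<subseteq> \<Phi> ` SX" and "achievable_rate SX s"
  shows "achievable_rate S s"
proof -
  obtain E D m where cod: "is_codec SX E D"
    and bnd: "\<And>R x. R \<ge> 1 \<Longrightarrow> x \<in> SX \<Longrightarrow> real R powr s * norm (x - D R (E R x)) \<le> m"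
    using \<open>achievable_rate SX s\<close> unfolding achievable_rate_iff_bounded by blast
  define pick where "pick z = (SOME x. x \<in> SX \<and> \<Phi> x = z)" for z
  define E' where "E' R z = E R (pick z)" for R z
  \<comment> \<open>Two points of S_X sharing a codeword lie within twice the distortion of each other,
    so decoding to the image of either one is accurate up to the Lipschitz constant.\<close>
  define D' where "D' R w = \<Phi> (SOME x. x \<in> SX \<and> E R x = w)" for R w
  have pick: "pick z \<in> SX \<and> \<Phi> (pick z) = z" if "z \<in> S" for z
    unfolding pick_def by (rule someI_ex) (use that img in blast)
  have "is_codec S E' D'" using cod pick unfolding is_codec_def E'_def by auto
  moreover have "real R powr s * norm (z - D' R (E' R z)) \<le> L * (2 * m)"
    if R: "R \<ge> 1" and z: "z \<in> S" for R z
  proof -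
    define x where "x = pick z"
    have x: "x \<in> SX" "\<Phi> x = z" using pick[OF z] x_def by auto
    define x' where "x' = (SOME x'. x' \<in> SX \<and> E R x' = E R x)"
    have "x' \<in> SX \<and> E R x' = E R x" unfolding x'_def by (rule someI_ex) (use x in blast)
    then have x': "x' \<in> SX" "E R x' = E R x" by auto
    have "D' R (E' R z) = \<Phi> x'" unfolding D'_def E'_def x'_def x_def by simp
    then have near: "norm (z - D' R (E' R z)) \<le> L * dist x x'"
      using lipschitz_onD[OF lip x(1) x'(1)] x(2) by (simp add: dist_norm)
    have close: "real R powr s * dist x x' \<le> 2 * m"
    proof -
      have "dist x x' \<le> norm (x - D R (E R x)) + norm (x' - D R (E R x'))"
        using x'(2) norm_triangle_ineq4[of "x - D R (E R x)" "x' - D R (E R x)"]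
        by (simp add: dist_norm)
      then have "real R powr s * dist x x'
          \<le> real R powr s * norm (x - D R (E R x)) + real R powr s * norm (x' - D R (E R x'))"
        by (simp add: distrib_left[symmetric] mult_left_mono)
      also have "\<dots> \<le> 2 * m" using bnd[OF R x(1)] bnd[OF R x'(1)] by simp
      finally show ?thesis .
    qed
    have "real R powr s * norm (z - D' R (E' R z)) \<le> real R powr s * (L * dist x x')"
      by (rule mult_left_mono[OF near]) simp
    also have "\<dots> = L * (real R powr s * dist x x')" by simp
    also have "\<dots> \<le> L * (2 * m)" by (rule mult_left_mono[OF close lipschitz_on_nonneg[OF lip]])
    finally show ?thesis .
  qed
  ultimately show ?thesis unfolding achievable_rate_iff_bounded by blast
qed

lemma opt_rate_lipschitz_image_ge:
  assumes "L-lipschitz_on SX \<Phi>" "S \<subseteq> \<Phi> ` SX"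
  shows "opt_rate SX \<le> opt_rate S"
  unfolding opt_rate_eq_Sup_achievable
  using achievable_rate_lipschitz_image[OF assms] by (intro Sup_subset_mono) blast

lemma borel_prob_on_space: "borel_prob_on S P \<Longrightarrow> space P = S"
  using sets_eq_imp_space_eq[of P "restrict_space borel S"]
  unfolding borel_prob_on_def by (simp add: space_restrict_space)

lemma borel_prob_on_cball: "borel_prob_on S P \<Longrightarrow> S \<inter> cball x e \<in> sets P"
  unfolding borel_prob_on_def sets_restrict_space by (auto intro!: image_eqI[where x="cball x e"])

lemma codec_ball_covering:
  assumes P: "borel_prob_on S P" and cod: "is_codec S E D" and R: "R \<ge> 1"
    and err: "\<And>x. x \<in> S \<Longrightarrow> norm (x - D R (E R x)) \<le> e"
    and ball: "\<And>x. measure P (S \<inter> cball x e) \<le> b"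
  shows "1 \<le> 2 ^ R * b"
proof -
  interpret prob_space P using P unfolding borel_prob_on_def by blast
  define W where "W = {w :: bool list. length w = R}"
  have W: "finite W" "card W = 2 ^ R"
    unfolding W_def
    using finite_lists_length_eq[of "UNIV :: bool set" R] card_lists_length_eq[of "UNIV :: bool set" R]
    by simp_all
  have cover: "S \<subseteq> (\<Union>w\<in>W. S \<inter> cball (D R w) e)"
  proof
    fix x assume x: "x \<in> S"
    have "E R x \<in> W" using cod R x unfolding is_codec_def W_def by auto
    moreover have "x \<in> cball (D R (E R x)) e" using err[OF x] by (simp add: dist_norm norm_minus_commute)
    ultimately show "x \<in> (\<Union>w\<in>W. S \<inter> cball (D R w) e)" using x by blast
  qed
  have "1 = measure P S" using prob_space borel_prob_on_space[OF P] by simp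
  also have "\<dots> \<le> measure P (\<Union>w\<in>W. S \<inter> cball (D R w) e)"
    using W(1) borel_prob_on_cball[OF P] by (intro finite_measure_mono[OF cover] sets.finite_UN) auto
  also have "\<dots> \<le> (\<Sum>w\<in>W. measure P (S \<inter> cball (D R w) e))"
    using W(1) borel_prob_on_cball[OF P] by (intro finite_measure_subadditive_finite) auto
  also have "\<dots> \<le> 2 ^ R * b" using sum_bounded_above[of W, OF ball] W(2) by simp
  finally show ?thesis .
qed

lemma not_achievable_rate_above_growth_order:
  assumes P: "borel_prob_on S P" and go: "growth_order S P s0" and "s0 < s"
  shows "\<not> achievable_rate S s"
proof
  assume "achievable_rate S s"
  then obtain E D m where cod: "is_codec S E D"
    and bnd: "\<And>R x. R \<ge> 1 \<Longrightarrow> x \<in> S \<Longrightarrow> real R powr s * norm (x - D R (E R x)) \<le> m"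
    unfolding achievable_rate_iff_bounded by blast
  define s' where "s' = (s + s0) / 2"
  have s': "s0 < s'" "0 < s'" "s / s' > 1"
    using \<open>s0 < s\<close> go unfolding growth_order_def s'_def by auto
  obtain e0 c where "e0 > 0" "c > 0"
    and ball: "\<And>x e. 0 < e \<Longrightarrow> e < e0 \<Longrightarrow> measure P (S \<inter> cball x e) \<le> 2 powr (- c * e powr (- 1 / s'))"
    using go s'(1) unfolding growth_order_def by blast
  define C where "C = \<bar>m\<bar> + 1"
  define k where "k = c * C powr (- 1 / s')"
  have "C > 0" "k > 0" using \<open>c > 0\<close> by (simp_all add: C_def k_def)
  have "eventually (\<lambda>R::nat. C * real R powr (- s) < e0) sequentially"
    using \<open>e0 > 0\<close> s' \<open>s0 < s\<close> by (intro order_tendstoD) (real_asymp, simp)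
  moreover have "eventually (\<lambda>R::nat. 2 ^ R * 2 powr (- k * real R powr (s / s')) < 1) sequentially"
    using \<open>k > 0\<close> s'(3) by (intro order_tendstoD) (real_asymp, simp)
  ultimately have "eventually (\<lambda>R::nat. R \<ge> 1 \<and> C * real R powr (- s) < e0
      \<and> 2 ^ R * 2 powr (- k * real R powr (s / s')) < 1) sequentially"
    using eventually_ge_at_top[of 1] by eventually_elim blast
  then obtain R :: nat where "R \<ge> 1" and R_err: "C * real R powr (- s) < e0"
    and R_small: "2 ^ R * 2 powr (- k * real R powr (s / s')) < 1"
    unfolding eventually_sequentially by blast
  define e where "e = C * real R powr (- s)"
  have "e > 0" using \<open>C > 0\<close> \<open>R \<ge> 1\<close> by (simp add: e_def)
  have err: "norm (x - D R (E R x)) \<le> e" if "x \<in> S" for x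
    using bnd[OF \<open>R \<ge> 1\<close> that] \<open>R \<ge> 1\<close>
    by (simp add: e_def C_def powr_minus field_simps)
  have "c * e powr (- 1 / s') = k * real R powr (s / s')"
    using \<open>C > 0\<close> by (simp add: e_def k_def powr_mult powr_powr)
  then have "1 \<le> 2 ^ R * 2 powr (- k * real R powr (s / s'))"
    using codec_ball_covering[OF P cod \<open>R \<ge> 1\<close> err ball[OF \<open>e > 0\<close>]] R_err by (simp add: e_def)
  with R_small show False by linarith
qed

lemma opt_rate_le_growth_order:
  assumes "borel_prob_on S P" "growth_order S P s0"
  shows "opt_rate S \<le> ereal s0"
  unfolding opt_rate_eq_Sup_achievable
proof (rule Sup_least)
  fix y assume "y \<in> {ereal s |s. 0 \<le> s \<and> achievable_rate S s}"
  then obtain s where "y = ereal s" "achievable_rate S s" by blast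
  then show "y \<le> ereal s0"
    using not_achievable_rate_above_growth_order[OF assms, of s] by (auto simp: not_less[symmetric])
qed

lemma growth_order_dominated:
  assumes go: "growth_order SY P s0" and "r > 0"
    and dom: "\<And>z e. e > 0 \<Longrightarrow> \<exists>x. measure Q (S \<inter> cball z e) \<le> measure P (SY \<inter> cball x (r * e))"
  shows "growth_order S Q s0"
  unfolding growth_order_def
proof (intro conjI allI impI)
  show "0 \<le> s0" using go unfolding growth_order_def by blast
  fix s assume "s0 < s"
  then obtain e0 c where "e0 > 0" "c > 0"
    and ball: "\<And>x e. 0 < e \<Longrightarrow> e < e0 \<Longrightarrow> measure P (SY \<inter> cball x e) \<le> 2 powr (- c * e powr (- 1 / s))"
    using go unfolding growth_order_def by blast
  have "measure Q (S \<inter> cball z e) \<le> 2 powr (- (c * r powr (- 1 / s)) * e powr (- 1 / s))"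
    if "0 < e" "e < e0 / r" for z e
  proof -
    obtain x where "measure Q (S \<inter> cball z e) \<le> measure P (SY \<inter> cball x (r * e))"
      using dom[OF \<open>0 < e\<close>] by blast
    also have "\<dots> \<le> 2 powr (- c * (r * e) powr (- 1 / s))"
      using that \<open>r > 0\<close> by (intro ball) (auto simp: field_simps)
    also have "\<dots> = 2 powr (- (c * r powr (- 1 / s)) * e powr (- 1 / s))"
      using that \<open>r > 0\<close> by (simp add: powr_mult mult.assoc)
    finally show ?thesis .
  qed
  moreover have "e0 / r > 0" "c * r powr (- 1 / s) > 0"
    using \<open>e0 > 0\<close> \<open>c > 0\<close> \<open>r > 0\<close> by simp_all
  ultimately show "\<exists>e0>0. \<exists>c>0. \<forall>x e. 0 < e \<and> e < e0 \<longrightarrow>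
      measure Q (S \<inter> cball x e) \<le> 2 powr (- c * e powr (- 1 / s))"
    by blast
qed

lemma expanding_vimage_cball_subset:
  assumes "\<kappa> > 0" and exp: "\<forall>x\<in>SY. \<forall>x'\<in>SY. norm (\<Psi> x - \<Psi> x') \<ge> \<kappa> * norm (x - x')"
    and "x0 \<in> SY" "\<Psi> x0 \<in> cball z e"
  shows "SY \<inter> \<Psi> -` cball z e \<subseteq> cball x0 (2 / \<kappa> * e)"
proof
  fix x assume x: "x \<in> SY \<inter> \<Psi> -` cball z e"
  have "\<kappa> * dist x0 x \<le> dist (\<Psi> x0) (\<Psi> x)"
    using exp x \<open>x0 \<in> SY\<close> by (simp add: dist_norm)
  also have "\<dots> \<le> dist (\<Psi> x0) z + dist z (\<Psi> x)" by (rule dist_triangle)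
  also have "\<dots> \<le> 2 * e" using x \<open>\<Psi> x0 \<in> cball z e\<close> by (simp add: dist_commute)
  finally show "x \<in> cball x0 (2 / \<kappa> * e)" using \<open>\<kappa> > 0\<close> by (simp add: field_simps)
qed

lemma borel_prob_on_measurable:
  assumes "borel_prob_on SY P" "\<Psi> \<in> restrict_space borel SY \<rightarrow>\<^sub>M N"
  shows "\<Psi> \<in> P \<rightarrow>\<^sub>M N"
  using assms measurable_cong_sets unfolding borel_prob_on_def by blast

lemma borel_prob_on_distr:
  assumes "borel_prob_on SY P" "\<Psi> \<in> restrict_space borel SY \<rightarrow>\<^sub>M restrict_space borel S"
  shows "borel_prob_on S (distr P (restrict_space borel S) \<Psi>)"
  using assms prob_space.prob_space_distr[OF _ borel_prob_on_measurable[OF assms]]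
  unfolding borel_prob_on_def by simp

lemma growth_order_distr_expanding:
  assumes P: "borel_prob_on SY P" and go: "growth_order SY P s0"
    and meas: "\<Psi> \<in> restrict_space borel SY \<rightarrow>\<^sub>M restrict_space borel S"
    and "\<kappa> > 0" and exp: "\<forall>x\<in>SY. \<forall>x'\<in>SY. norm (\<Psi> x - \<Psi> x') \<ge> \<kappa> * norm (x - x')"
  shows "growth_order S (distr P (restrict_space borel S) \<Psi>) s0"
proof (rule growth_order_dominated[OF go])
  interpret prob_space P using P unfolding borel_prob_on_def by blast
  show "2 / \<kappa> > 0" using \<open>\<kappa> > 0\<close> by simp
  fix z and e :: real
  define A where "A = \<Psi> -` (S \<inter> cball z e) \<inter> space P"
  have distr_eq: "measure (distr P (restrict_space borel S) \<Psi>) (S \<inter> cball z e) = measure P A"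
    unfolding A_def
    by (intro measure_distr borel_prob_on_measurable[OF P meas])
       (auto simp: sets_restrict_space)
  have "\<exists>x. measure P A \<le> measure P (SY \<inter> cball x (2 / \<kappa> * e))"
  proof (cases "A = {}")
    case False
    then obtain x0 where x0: "x0 \<in> A" by blast
    have "A \<subseteq> SY \<inter> cball x0 (2 / \<kappa> * e)"
      using expanding_vimage_cball_subset[OF \<open>\<kappa> > 0\<close> exp, of x0 z e] x0
      unfolding A_def borel_prob_on_space[OF P] by blast
    then have "measure P A \<le> measure P (SY \<inter> cball x0 (2 / \<kappa> * e))"
      by (intro finite_measure_mono borel_prob_on_cball[OF P])
    then show ?thesis by blast
  qed simp
  with distr_eq show "\<exists>x. measure (distr P (restrict_space borel S) \<Psi>) (S \<inter> cball z e)
      \<le> measure P (SY \<inter> cball x (2 / \<kappa> * e))" by simp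
qed

theorem theorem2p6:
  fixes SX :: "'a::banach set" and SY :: "'b::banach set" and S :: "'c::banach set"
    and \<Phi> :: "'a \<Rightarrow> 'c" and P :: "'b measure" and \<Psi> :: "'b \<Rightarrow> 'c" and \<kappa> :: real
  assumes rates: "opt_rate SX = opt_rate SY"
    and Phi_lip: "\<exists>C. C-lipschitz_on SX \<Phi>"
    and Phi_img: "S \<subseteq> \<Phi> ` SX"
    and P_borel: "borel_prob_on SY P"
    and P_crit: "critical SY P"
    and Psi_meas: "\<Psi> \<in> restrict_space borel SY \<rightarrow>\<^sub>M restrict_space borel S"
    and kappa: "\<kappa> > 0"
    and Psi_exp: "\<forall>x\<in>SY. \<forall>x'\<in>SY. norm (\<Psi> x - \<Psi> x') \<ge> \<kappa> * norm (x - x')"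
  shows "opt_rate S = opt_rate SX
    \<and> borel_prob_on S (distr P (restrict_space borel S) \<Psi>)
    \<and> critical S (distr P (restrict_space borel S) \<Psi>)"
proof -
  obtain s0 where s0: "opt_rate SY = ereal s0" and go: "growth_order SY P s0"
    using P_crit unfolding critical_def by blast
  obtain L where lip: "L-lipschitz_on SX \<Phi>" using Phi_lip by blast
  define Q where "Q = distr P (restrict_space borel S) \<Psi>"
  have Q_borel: "borel_prob_on S Q"
    unfolding Q_def by (rule borel_prob_on_distr[OF P_borel Psi_meas])
  have Q_go: "growth_order S Q s0"
    unfolding Q_def by (rule growth_order_distr_expanding[OF P_borel go Psi_meas kappa Psi_exp])
  have "opt_rate S \<le> ereal s0" by (rule opt_rate_le_growth_order[OF Q_borel Q_go])
  moreover have "opt_rate SX \<le> opt_rate S" by (rule opt_rate_lipschitz_image_ge[OF lip Phi_img])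
  ultimately have "opt_rate S = ereal s0" using rates s0 by simp
  with rates s0 Q_borel Q_go show ?thesis unfolding Q_def critical_def by auto
qed

end
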